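(* Let $u$ be a 5-complex number with $\rho_1>0$ (so $\theta_+\in(0,\pi)$ and $\psi_1\in(0,\pi/2]$). Then $$u=d\left(\frac52\right)^{1/2}\left(\cot^2\theta_++1+\cot^2\psi_1\right)^{-1/2}\left(\sqrt2\,e_+\cot\theta_++e_1+e_2\cot\psi_1\right)\exp\left(\tilde e_1\phi_1+\tilde e_2\phi_2\right),$$ where $\exp w=\sum_{n\ge0}w^n/n!$.
   Context: A 5-complex number is $u=x_0+h_1x_1+h_2x_2+h_3x_3+h_4x_4$ with real $x_j$, with componentwise addition and the commutative associative bilinear multiplication determined by $h_jh_k=h_{(j+k)\bmod 5}$, $h_0=1$. Modulus $d=(\sum_jx_j^2)^{1/2}$. Canonical variables: $v_+=\sum_jx_j$ and, for $k=1,2$, $v_k=\sum_jx_j\cos(2\pi kj/5)$, $\tilde v_k=\sum_jx_j\sin(2\pi kj/5)$. For $k=1,2$: $\rho_k=(v_k^2+\tilde v_k^2)^{1/2}$, $\phi_k\in[0,2\pi)$ with $\cos\phi_k=v_k/\rho_k$, $\sin\phi_k=\tilde v_k/\rho_k$. Planar angle $\psi_1\in[0,\pi/2]$: $\tan\psi_1=\rho_1/\rho_2$. Polar angle $\theta_+\in[0,\pi]$: $\tan\theta_+=\sqrt2\rho_1/v_+$. Canonical basis (with $h_0=1$): $e_+=\frac15\sum_{j=0}^4h_j$, and for $k=1,2$: $e_k=\frac25\sum_{j=0}^4\cos(2\pi kj/5)h_j$, $\tilde e_k=\frac25\sum_{j=0}^4\sin(2\pi kj/5)h_j$. Here $\cot$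 denotes $1/\tan$, with $\cot(\pi/2)=0$. *)

theory Defs
  imports "HOL-Analysis.Analysis"
begin

text \<open>5-complex numbers: u = x0 + h1 x1 + ... + h4 x4 represented as vectors in real^5,
  component j (j<5) being u $ of_nat j; the index type 5 has arithmetic mod 5.\<close>

type_synonym tc5 = "real ^ 5"

definition xc :: "tc5 \<Rightarrow> nat \<Rightarrow> real" where
  "xc u j = u $ (of_nat j :: 5)"

definition hb :: "nat \<Rightarrow> tc5" where
  "hb j = axis (of_nat j :: 5) 1"

definition mult5 :: "tc5 \<Rightarrow> tc5 \<Rightarrow> tc5" where
  "mult5 u w = (\<Sum>j<5. \<Sum>l<5. (xc u j * xc w l) *\<^sub>R hb (j + l))"

fun pow5 :: "tc5 \<Rightarrow> nat \<Rightarrow> tc5" where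
  "pow5 w 0 = hb 0"
| "pow5 w (Suc n) = mult5 w (pow5 w n)"

definition exp5 :: "tc5 \<Rightarrow> tc5" where
  "exp5 w = (\<Sum>n. (1 / fact n) *\<^sub>R pow5 w n)"

definition modulus5 :: "tc5 \<Rightarrow> real" where
  "modulus5 u = sqrt (\<Sum>j<5. (xc u j)^2)"

definition vplus :: "tc5 \<Rightarrow> real" where
  "vplus u = (\<Sum>j<5. xc u j)"

definition vk :: "nat \<Rightarrow> tc5 \<Rightarrow> real" where
  "vk k u = (\<Sum>j<5. xc u j * cos (2 * pi * real k * real j / 5))"

definition vtk :: "nat \<Rightarrow> tc5 \<Rightarrow> real" where
  "vtk k u = (\<Sum>j<5. xc u j * sin (2 * pi * real k * real j / 5))"

definition rhok :: "nat \<Rightarrow> tc5 \<Rightarrow> real" where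
  "rhok k u = sqrt ((vk k u)^2 + (vtk k u)^2)"

definition phik :: "nat \<Rightarrow> tc5 \<Rightarrow> real" where
  "phik k u = (SOME \<phi>. 0 \<le> \<phi> \<and> \<phi> < 2 * pi \<and>
      cos \<phi> = vk k u / rhok k u \<and> sin \<phi> = vtk k u / rhok k u)"

definition psi1 :: "tc5 \<Rightarrow> real" where
  "psi1 u = (if rhok 2 u = 0 then pi / 2 else arctan (rhok 1 u / rhok 2 u))"

definition thetap :: "tc5 \<Rightarrow> real" where
  "thetap u = (if vplus u > 0 then arctan (sqrt 2 * rhok 1 u / vplus u)
               else if vplus u = 0 then pi / 2
               else pi + arctan (sqrt 2 * rhok 1 u / vplus u))"

definition eplus :: tc5 where
  "eplus = (1/5) *\<^sub>R (\<Sum>j<5. hb j)"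

definition ek :: "nat \<Rightarrow> tc5" where
  "ek k = (2/5) *\<^sub>R (\<Sum>j<5. cos (2 * pi * real k * real j / 5) *\<^sub>R hb j)"

definition etk :: "nat \<Rightarrow> tc5" where
  "etk k = (2/5) *\<^sub>R (\<Sum>j<5. sin (2 * pi * real k * real j / 5) *\<^sub>R hb j)"

end

theory Submission
  imports Defs
begin

(* The discrete Fourier transform F_k u = sum_j x_j w^(kj), w = exp(2 pi i/5), sends a 5-complex
   number to F_0 u = v_+ and F_k u = rho_k e^(i phi_k) for k = 1, 2, while F_3, F_4 are the conjugates
   of F_2, F_1; so F_0, F_1, F_2 determine u. Each F_k is a continuous real-linear ring homomorphism
   into C, hence commutes with exp, and the canonical basis is dual to it: e_+, e_m and e~_m have
   transforms 1, 1 and i at the matching index and 0 at the others. The right-hand side therefore has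
   transforms r sqrt 2 cot theta_+, r e^(i phi_1) and r cot psi_1 e^(i phi_2), r being its scalar
   prefactor, and Parseval's identity 5 d^2 = v_+^2 + 2 rho_1^2 + 2 rho_2^2 gives r = rho_1, which
   turns these into v_+, rho_1 e^(i phi_1) and rho_2 e^(i phi_2). *)

section \<open>Roots of unity\<close>

lemma cis_2pi_mod: "cis (2 * pi * real (n mod N) / real N) = cis (2 * pi * real n / real N)"
proof (cases "N = 0")
  case False
  have "real n = real (n mod N) + real N * real (n div N)"
    by (metis mod_mult_div_eq of_nat_add of_nat_mult)
  then have "2 * pi * real n / real N = 2 * pi * real (n mod N) / real N + 2 * pi * real (n div N)"
    using False by (simp add: field_simps)
  then show ?thesis
    by (simp add: cis_mult[symmetric])
qed simp

lemma cnj_cis_2pi: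
  assumes "m \<le> N"
  shows "cnj (cis (2 * pi * real m * real n / real N)) = cis (2 * pi * real (N - m) * real n / real N)"
proof (cases "N = 0")
  case False
  then have "2 * pi * real (N - m) * real n / real N
      = - (2 * pi * real m * real n / real N) + 2 * pi * real n"
    using assms by (simp add: of_nat_diff field_simps)
  then have "cis (2 * pi * real (N - m) * real n / real N)
      = cis (- (2 * pi * real m * real n / real N)) * cis (2 * pi * real n)"
    by (simp only: cis_mult)
  then show ?thesis
    by (simp add: cis_cnj)
qed (use assms in simp)

lemma sum_cis_roots_of_unity:
  assumes "N > 0"
  shows "(\<Sum>j<N. cis (2 * pi * real n * real j / real N)) = (if N dvd n then of_nat N else 0)"
proof -
  define z where "z = cis (2 * pi * real n / real N)"
  have pow: "z ^ j = cis (2 * pi * real n * real j / real N)" for j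
    unfolding z_def Complex.DeMoivre by (rule arg_cong[where f = cis]) (simp add: field_simps)
  have "z = 1 \<longleftrightarrow> N dvd n"
    using complex_root_unity_eq_1[of N n] assms by (simp add: z_def cis_conv_exp mult_ac)
  moreover have "z ^ N = 1"
    using assms by (simp add: pow)
  moreover have "(\<Sum>j<N. cis (2 * pi * real n * real j / real N)) = (\<Sum>j<N. z ^ j)"
    by (simp only: pow)
  ultimately show ?thesis
    by (simp add: sum_gp_strict)
qed

lemma cis_2pi_add:
  "cis (2 * pi * real a * x / N) * cis (2 * pi * real b * x / N) = cis (2 * pi * real (a + b) * x / N)"
  by (simp add: cis_mult distrib_left distrib_right add_divide_distrib)

section \<open>Coordinates of 5-complex numbers\<close>

lemma of_nat_5_eq_iff: "(of_nat j :: 5) = of_nat m \<longleftrightarrow> j mod 5 = m mod 5"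
proof -
  have Rep_mod: "Rep_bit1 (Abs_bit1 (x mod 5) :: 5) = x mod 5" for x
    by (rule bit1.Abs_inverse) auto
  have "(of_nat j :: 5) = of_nat m \<longleftrightarrow> Rep_bit1 (of_nat j :: 5) = Rep_bit1 (of_nat m :: 5)"
    by (simp add: bit1.Rep_inject_sym)
  also have "\<dots> \<longleftrightarrow> int j mod 5 = int m mod 5"
    by (simp add: bit1.of_nat_eq Rep_mod)
  also have "\<dots> \<longleftrightarrow> j mod 5 = m mod 5"
    by (metis of_nat_eq_iff of_nat_numeral zmod_int)
  finally show ?thesis .
qed

lemma ex_of_nat_5: "\<exists>j<5. i = (of_nat j :: 5)"
proof (cases i rule: bit1_cases)
  case (of_int z)
  then show ?thesis by (intro exI[of _ "nat z"]) simp
qed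

lemma xc_add [simp]: "xc (a + b) j = xc a j + xc b j"
  by (simp add: xc_def)

lemma xc_scaleR [simp]: "xc (c *\<^sub>R a) j = c * xc a j"
  by (simp add: xc_def)

lemma xc_sum: "xc (sum f S) j = (\<Sum>i\<in>S. xc (f i) j)"
  by (simp add: xc_def)

lemma xc_hb: "xc (hb m) j = (if j mod 5 = m mod 5 then 1 else 0)"
  by (simp add: xc_def hb_def axis_def of_nat_5_eq_iff)

lemma tc5_eqI: "(\<And>j. j < 5 \<Longrightarrow> xc a j = xc b j) \<Longrightarrow> a = b"
  unfolding vec_eq_iff xc_def by (metis ex_of_nat_5)

lemma tc5_expansion: "v = (\<Sum>j<5. xc v j *\<^sub>R hb j)"
proof (rule tc5_eqI)
  fix m :: nat assume "m < 5"
  then show "xc v m = xc (\<Sum>j<5. xc v j *\<^sub>R hb j) m"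
    by (simp add: xc_sum xc_hb if_distrib cong: if_cong)
qed

section \<open>The discrete Fourier transform\<close>

definition dft5 :: "nat \<Rightarrow> tc5 \<Rightarrow> complex" where
  "dft5 k u = (\<Sum>j<5. of_real (xc u j) * cis (2 * pi * real k * real j / 5))"

lemma dft5_eq_Complex: "dft5 k u = Complex (vk k u) (vtk k u)"
  by (simp add: dft5_def vk_def vtk_def complex_eq_iff Re_sum Im_sum mult_ac)

lemma dft5_add: "dft5 k (a + b) = dft5 k a + dft5 k b"
  by (simp add: dft5_def distrib_right sum.distrib)

lemma dft5_scaleR: "dft5 k (c *\<^sub>R a) = of_real c * dft5 k a"
  by (simp add: dft5_def sum_distrib_left mult.assoc)

lemma dft5_sum: "dft5 k (sum f S) = (\<Sum>i\<in>S. dft5 k (f i))"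
  unfolding dft5_def xc_sum of_real_sum sum_distrib_right by (rule sum.swap)

lemma bounded_linear_dft5: "bounded_linear (dft5 k)"
  unfolding linear_conv_bounded_linear[symmetric]
proof (rule linearI)
  show "dft5 k (c *\<^sub>R x) = c *\<^sub>R dft5 k x" for c x
    unfolding dft5_scaleR by (simp add: scaleR_conv_of_real)
qed (rule dft5_add)

lemma dft5_hb: "dft5 k (hb m) = cis (2 * pi * real k * real m / 5)"
proof -
  have "dft5 k (hb m) = (\<Sum>j<5. if j = m mod 5 then cis (2 * pi * real k * real j / 5) else 0)"
    unfolding dft5_def by (rule sum.cong) (auto simp: xc_hb)
  also have "\<dots> = cis (2 * pi * real (k * (m mod 5)) / 5)"
    by (simp add: mult.assoc)
  also have "\<dots> = cis (2 * pi * real (k * m) / 5)"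
    using cis_2pi_mod[of "k * (m mod 5)" 5] cis_2pi_mod[of "k * m" 5]
    by (simp add: mod_mult_right_eq)
  finally show ?thesis by (simp add: mult.assoc)
qed

lemma dft5_mult5: "dft5 k (mult5 u w) = dft5 k u * dft5 k w"
proof -
  have cis_add: "cis (2 * pi * real k * real (j + l) / 5)
      = cis (2 * pi * real k * real j / 5) * cis (2 * pi * real k * real l / 5)" for j l
    by (simp add: cis_mult distrib_left add_divide_distrib)
  show ?thesis
    unfolding mult5_def dft5_sum dft5_scaleR dft5_hb cis_add
    by (simp add: dft5_def sum_product mult_ac)
qed

lemma dft5_pow5: "dft5 k (pow5 w n) = dft5 k w ^ n"
  by (induction n) (simp_all add: dft5_hb dft5_mult5)

lemma dft5_inversion:
  assumes "j < 5"
  shows "(\<Sum>k<5. dft5 k v * cnj (cis (2 * pi * real k * real j / 5))) = of_real (5 * xc v j)"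
proof -
  have kernel: "c * cis (2 * pi * real k * real l / 5) * cnj (cis (2 * pi * real k * real j / 5))
      = c * cis (2 * pi * real (l + (5 - j)) * real k / 5)" for c k l
  proof -
    have "cnj (cis (2 * pi * real k * real j / 5)) = cis (2 * pi * real (5 - j) * real k / 5)"
      using cnj_cis_2pi[of j 5 k] assms by (simp add: mult_ac)
    then show ?thesis
      by (simp add: cis_mult distrib_left distrib_right add_divide_distrib mult_ac)
  qed
  have "(\<Sum>k<5. dft5 k v * cnj (cis (2 * pi * real k * real j / 5)))
      = (\<Sum>l<5. of_real (xc v l) * (\<Sum>k<5. cis (2 * pi * real (l + (5 - j)) * real k / 5)))"
    unfolding dft5_def sum_distrib_right kernel
    by (subst sum.swap) (simp only: sum_distrib_left)
  also have "\<dots> = (\<Sum>l<5. of_real (xc v l) * (if l = j then 5 else 0))"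
  proof (rule sum.cong)
    fix l assume "l \<in> {..<5::nat}"
    then have "5 dvd l + (5 - j) \<longleftrightarrow> l = j"
      using assms by auto presburger+
    then show "of_real (xc v l) * (\<Sum>k<5. cis (2 * pi * real (l + (5 - j)) * real k / 5))
        = of_real (xc v l) * (if l = j then 5 else 0)"
      using sum_cis_roots_of_unity[of 5 "l + (5 - j)"] by simp
  qed simp
  also have "\<dots> = (\<Sum>l<5. if l = j then of_real (5 * xc v l) else 0)"
    by (rule sum.cong) auto
  also have "\<dots> = of_real (5 * xc v j)"
    using assms by simp
  finally show ?thesis .
qed

lemma dft5_inject:
  assumes "\<And>k. k < 5 \<Longrightarrow> dft5 k a = dft5 k b"
  shows "a = b"
proof (rule tc5_eqI)
  fix j :: nat assume j: "j < 5"
  have "(\<Sum>k<5. dft5 k a * cnj (cis (2 * pi * real k * real j / 5)))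
      = (\<Sum>k<5. dft5 k b * cnj (cis (2 * pi * real k * real j / 5)))"
    using assms by (intro sum.cong) simp_all
  then show "xc a j = xc b j"
    by (simp add: dft5_inversion[OF j])
qed

definition idft5 :: "(nat \<Rightarrow> complex) \<Rightarrow> tc5" where
  "idft5 c = (\<Sum>j<5. (Re (\<Sum>k<5. c k * cnj (cis (2 * pi * real k * real j / 5))) / 5) *\<^sub>R hb j)"

lemma idft5_dft5: "idft5 (\<lambda>k. dft5 k v) = v"
proof -
  have "idft5 (\<lambda>k. dft5 k v) = (\<Sum>j<5. xc v j *\<^sub>R hb j)"
    unfolding idft5_def by (rule sum.cong) (simp_all add: dft5_inversion)
  then show ?thesis
    using tc5_expansion by simp
qed

lemma summable_exp5_series: "summable (\<lambda>n. (1 / fact n) *\<^sub>R pow5 w n)"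
proof -
  have dft_terms: "dft5 k ((1 / fact n) *\<^sub>R pow5 w n) = dft5 k w ^ n /\<^sub>R fact n" for k n
    unfolding dft5_scaleR dft5_pow5 by (simp add: scaleR_conv_of_real divide_inverse)
  have "(\<lambda>n. idft5 (\<lambda>k. dft5 k w ^ n /\<^sub>R fact n)) sums idft5 (\<lambda>k. exp (dft5 k w))"
    unfolding idft5_def
    by (intro sums_sum sums_scaleR_left sums_divide sums_Re sums_mult2 exp_converges)
  then show ?thesis
    unfolding dft_terms[symmetric] idft5_dft5 by (rule sums_summable)
qed

lemma dft5_exp5: "dft5 k (exp5 w) = exp (dft5 k w)"
proof -
  have "(\<lambda>n. dft5 k ((1 / fact n) *\<^sub>R pow5 w n)) sums dft5 k (exp5 w)"
    unfolding exp5_def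
    by (intro bounded_linear.sums[OF bounded_linear_dft5] summable_sums summable_exp5_series)
  moreover have "(\<lambda>n. dft5 k ((1 / fact n) *\<^sub>R pow5 w n)) sums exp (dft5 k w)"
    using exp_converges[of "dft5 k w"] unfolding dft5_scaleR dft5_pow5
    by (simp add: scaleR_conv_of_real divide_inverse mult.commute)
  ultimately show ?thesis
    by (rule sums_unique2)
qed

lemma dft5_conj: "k \<le> 5 \<Longrightarrow> dft5 (5 - k) v = cnj (dft5 k v)"
  using cnj_cis_2pi[of k 5] by (simp add: dft5_def)

lemma dft5_eqI:
  assumes "dft5 0 a = dft5 0 b" "dft5 1 a = dft5 1 b" "dft5 2 a = dft5 2 b"
  shows "a = b"
proof (rule dft5_inject)
  fix k :: nat assume "k < 5"
  then consider "k = 0" | "k = 1" | "k = 2" | "k = 5 - 2" | "k = 5 - 1"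
    by linarith
  then show "dft5 k a = dft5 k b"
    by cases (use assms dft5_conj[of 2] dft5_conj[of 1] in auto)
qed

lemma dft5_parseval: "(\<Sum>k<5. (cmod (dft5 k u))^2) = 5 * (\<Sum>j<5. (xc u j)^2)"
proof -
  have conj_expansion: "dft5 k u * cnj (dft5 k u)
      = (\<Sum>j<5. of_real (xc u j) * (dft5 k u * cnj (cis (2 * pi * real k * real j / 5))))" for k
  proof -
    have "cnj (dft5 k u) = (\<Sum>j<5. of_real (xc u j) * cnj (cis (2 * pi * real k * real j / 5)))"
      by (simp add: dft5_def cnj_sum)
    then show ?thesis
      by (simp add: sum_distrib_left mult.left_commute)
  qed
  have "of_real (\<Sum>k<5. (cmod (dft5 k u))^2) = (\<Sum>k<5. dft5 k u * cnj (dft5 k u))"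
    by (simp only: of_real_sum complex_norm_square)
  also have "\<dots> = (\<Sum>j<5. of_real (xc u j) *
      (\<Sum>k<5. dft5 k u * cnj (cis (2 * pi * real k * real j / 5))))"
    by (simp only: conj_expansion sum_distrib_left) (rule sum.swap)
  also have "\<dots> = (\<Sum>j<5. of_real (xc u j) * of_real (5 * xc u j))"
    by (rule sum.cong) (simp_all add: dft5_inversion)
  also have "\<dots> = of_real (5 * (\<Sum>j<5. (xc u j)^2))"
    by (simp add: sum_distrib_left power2_eq_square mult_ac)
  finally show ?thesis
    by (simp only: of_real_eq_iff)
qed

section \<open>The canonical basis\<close>

lemma dft5_real_combination:
  "dft5 k (\<Sum>j<5. c j *\<^sub>R hb j) = (\<Sum>j<5. of_real (c j) * cis (2 * pi * real k * real j / 5))"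
  by (simp add: dft5_sum dft5_scaleR dft5_hb)

lemma dft5_eplus: "dft5 k eplus = (if 5 dvd k then 1 else 0)"
  using sum_cis_roots_of_unity[of 5 k]
  by (simp add: eplus_def dft5_scaleR dft5_sum dft5_hb)

lemma dft5_ek:
  assumes "m \<le> 5"
  shows "dft5 k (ek m) = (if 5 dvd m + k then 1 else 0) + (if 5 dvd (5 - m) + k then 1 else 0)"
proof -
  have summand: "of_real (cos (2 * pi * real m * real j / 5)) * cis (2 * pi * real k * real j / 5)
      = (cis (2 * pi * real (m + k) * real j / 5)
          + cis (2 * pi * real ((5 - m) + k) * real j / 5)) / 2"
    for j
  proof -
    have "of_real (cos (2 * pi * real m * real j / 5))
        = (cis (2 * pi * real m * real j / 5) + cis (2 * pi * real (5 - m) * real j / 5)) / 2"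
      using cnj_cis_2pi[of m 5 j] assms by (simp add: complex_eq_iff)
    then show ?thesis
      by (simp add: add_divide_distrib distrib_right cis_2pi_add)
  qed
  have "dft5 k (ek m) = 2 / 5 *
      (\<Sum>j<5. of_real (cos (2 * pi * real m * real j / 5)) * cis (2 * pi * real k * real j / 5))"
    by (simp add: ek_def dft5_scaleR dft5_real_combination)
  also have "\<dots> = ((\<Sum>j<5. cis (2 * pi * real (m + k) * real j / 5))
      + (\<Sum>j<5. cis (2 * pi * real ((5 - m) + k) * real j / 5))) / 5"
    unfolding summand by (simp add: sum.distrib flip: sum_divide_distrib)
  also have "\<dots> = (if 5 dvd m + k then 1 else 0) + (if 5 dvd (5 - m) + k then 1 else 0)"
    using sum_cis_roots_of_unity[of 5 "m + k"] sum_cis_roots_of_unity[of 5 "(5 - m) + k"] by simp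
  finally show ?thesis .
qed

lemma dft5_etk:
  assumes "m \<le> 5"
  shows "dft5 k (etk m) = \<i> * ((if 5 dvd (5 - m) + k then 1 else 0) - (if 5 dvd m + k then 1 else 0))"
proof -
  have summand: "of_real (sin (2 * pi * real m * real j / 5)) * cis (2 * pi * real k * real j / 5)
      = (cis (2 * pi * real (m + k) * real j / 5)
          - cis (2 * pi * real ((5 - m) + k) * real j / 5)) / (2 * \<i>)"
    for j
  proof -
    have "of_real (sin (2 * pi * real m * real j / 5))
        = (cis (2 * pi * real m * real j / 5) - cis (2 * pi * real (5 - m) * real j / 5)) / (2 * \<i>)"
      using cnj_cis_2pi[of m 5 j, symmetric] assms by (simp add: complex_eq_iff)
    then show ?thesis
      by (simp add: diff_divide_distrib left_diff_distrib cis_2pi_add)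
  qed
  have "dft5 k (etk m) = 2 / 5 *
      (\<Sum>j<5. of_real (sin (2 * pi * real m * real j / 5)) * cis (2 * pi * real k * real j / 5))"
    by (simp add: etk_def dft5_scaleR dft5_real_combination)
  also have "\<dots> = ((\<Sum>j<5. cis (2 * pi * real (m + k) * real j / 5))
      - (\<Sum>j<5. cis (2 * pi * real ((5 - m) + k) * real j / 5))) / (5 * \<i>)"
    unfolding summand sum_divide_distrib[symmetric] sum_subtractf by simp
  also have "\<dots> = \<i> * ((if 5 dvd (5 - m) + k then 1 else 0) - (if 5 dvd m + k then 1 else 0))"
    using sum_cis_roots_of_unity[of 5 "m + k"] sum_cis_roots_of_unity[of 5 "(5 - m) + k"]
    by (simp add: field_simps)
  finally show ?thesis .
qed

lemma dft5_canonical_basis: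
  "dft5 0 eplus = 1" "dft5 1 eplus = 0" "dft5 2 eplus = 0"
  "dft5 0 (ek 1) = 0" "dft5 1 (ek 1) = 1" "dft5 2 (ek 1) = 0"
  "dft5 0 (ek 2) = 0" "dft5 1 (ek 2) = 0" "dft5 2 (ek 2) = 1"
  "dft5 0 (etk 1) = 0" "dft5 1 (etk 1) = \<i>" "dft5 2 (etk 1) = 0"
  "dft5 0 (etk 2) = 0" "dft5 1 (etk 2) = 0" "dft5 2 (etk 2) = \<i>"
  by (simp_all add: dft5_eplus dft5_ek dft5_etk del: One_nat_def)

lemma dft5_polar_factor:
  fixes p q a b :: real
  defines "X \<equiv> mult5 (p *\<^sub>R eplus + ek 1 + q *\<^sub>R ek 2) (exp5 (a *\<^sub>R etk 1 + b *\<^sub>R etk 2))"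
  shows "dft5 0 X = of_real p" "dft5 1 X = cis a" "dft5 2 X = of_real q * cis b"
  by (simp_all add: X_def dft5_mult5 dft5_exp5 dft5_add dft5_scaleR dft5_canonical_basis
      cis_conv_exp mult.commute del: One_nat_def)

section \<open>Canonical coordinates\<close>

lemma dft5_0: "dft5 0 u = of_real (vplus u)"
  by (simp add: dft5_eq_Complex vk_def vtk_def vplus_def complex_eq_iff)

lemma norm_dft5: "cmod (dft5 k u) = rhok k u"
  by (simp add: dft5_eq_Complex rhok_def cmod_def)

lemma dft5_polar: "dft5 k u = of_real (rhok k u) * cis (phik k u)"
proof (cases "rhok k u = 0")
  case True
  then show ?thesis
    by (metis mult_zero_left norm_dft5 norm_eq_zero of_real_0)
next
  case False
  moreover have "rhok k u \<ge> 0"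
    by (simp add: rhok_def)
  ultimately have rho: "rhok k u > 0"
    by linarith
  have rho_sq: "(rhok k u)^2 = (vk k u)^2 + (vtk k u)^2"
    by (simp add: rhok_def)
  have "(vk k u / rhok k u)^2 + (vtk k u / rhok k u)^2 = ((vk k u)^2 + (vtk k u)^2) / (rhok k u)^2"
    by (simp only: power_divide add_divide_distrib)
  also have "\<dots> = 1"
    using rho by (simp add: rho_sq[symmetric])
  finally have "(vk k u / rhok k u)^2 + (vtk k u / rhok k u)^2 = 1" .
  then have "\<exists>t. 0 \<le> t \<and> t < 2 * pi \<and> cos t = vk k u / rhok k u \<and> sin t = vtk k u / rhok k u"
    by (metis sincos_total_2pi)
  then have "cos (phik k u) = vk k u / rhok k u \<and> sin (phik k u) = vtk k u / rhok k u"
    unfolding phik_def by (rule someI2_ex) auto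
  then show ?thesis
    using rho by (simp add: dft5_eq_Complex complex_eq_iff)
qed

lemma modulus5_sq_canonical:
  "5 * (modulus5 u)^2 = (vplus u)^2 + 2 * (rhok 1 u)^2 + 2 * (rhok 2 u)^2"
proof -
  have norms: "cmod (dft5 0 u) = \<bar>vplus u\<bar>"
      "cmod (dft5 1 u) = rhok 1 u" "cmod (dft5 2 u) = rhok 2 u"
      "cmod (dft5 3 u) = rhok 2 u" "cmod (dft5 4 u) = rhok 1 u"
    using dft5_conj[of 2 u] dft5_conj[of 1 u] by (simp_all add: norm_dft5 dft5_0)
  have "(\<Sum>k<5. (cmod (dft5 k u))^2) = (cmod (dft5 0 u))^2 + (cmod (dft5 1 u))^2
      + (cmod (dft5 2 u))^2 + (cmod (dft5 3 u))^2 + (cmod (dft5 4 u))^2"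
    by (simp add: numeral_eq_Suc)
  also have "\<dots> = (vplus u)^2 + 2 * (rhok 1 u)^2 + 2 * (rhok 2 u)^2"
    by (simp only: norms power2_abs)
  finally have "(\<Sum>k<5. (cmod (dft5 k u))^2) = (vplus u)^2 + 2 * (rhok 1 u)^2 + 2 * (rhok 2 u)^2" .
  moreover have "(modulus5 u)^2 = (\<Sum>j<5. (xc u j)^2)"
    by (simp add: modulus5_def sum_nonneg)
  ultimately show ?thesis
    by (simp add: dft5_parseval)
qed

lemma cot_thetap: "cot (thetap u) = vplus u / (sqrt 2 * rhok 1 u)"
proof -
  consider "vplus u > 0" | "vplus u = 0" | "vplus u < 0"
    by linarith
  then show ?thesis
  proof cases
    case 1
    then show ?thesis
      by (simp add: thetap_def cot_altdef tan_arctan)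
  next
    case 2
    then show ?thesis
      by (simp add: thetap_def cot_def)
  next
    case 3
    have "tan (pi + arctan (sqrt 2 * rhok 1 u / vplus u)) = sqrt 2 * rhok 1 u / vplus u"
      using tan_periodic_pi[of "arctan (sqrt 2 * rhok 1 u / vplus u)"]
      by (simp add: add.commute tan_arctan)
    with 3 show ?thesis
      by (simp add: thetap_def cot_altdef)
  qed
qed

lemma cot_psi1: "cot (psi1 u) = rhok 2 u / rhok 1 u"
  by (cases "rhok 2 u = 0") (simp_all add: psi1_def cot_altdef tan_arctan)

lemma polar_amplitude_eq_rhok1:
  assumes "rhok 1 u > 0"
  shows "modulus5 u * sqrt (5/2) / sqrt ((cot (thetap u))^2 + 1 + (cot (psi1 u))^2) = rhok 1 u"
proof -
  have "0 < (vplus u)^2 + 2 * (rhok 1 u)^2 + 2 * (rhok 2 u)^2"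
    using assms by (intro add_pos_nonneg add_nonneg_pos) simp_all
  then have "modulus5 u \<noteq> 0"
    by (metis modulus5_sq_canonical mult_zero_right power_zero_numeral less_irrefl)
  moreover have "modulus5 u \<ge> 0"
    by (simp add: modulus5_def sum_nonneg)
  ultimately have d_pos: "modulus5 u > 0"
    by simp
  have "(cot (thetap u))^2 + 1 + (cot (psi1 u))^2
      = ((vplus u)^2 + 2 * (rhok 1 u)^2 + 2 * (rhok 2 u)^2) / (2 * (rhok 1 u)^2)"
    using assms by (simp add: cot_thetap cot_psi1 power_divide power_mult_distrib field_simps)
  also have "\<dots> = (sqrt (5/2) * modulus5 u / rhok 1 u)^2"
    using assms modulus5_sq_canonical[of u]
    by (simp add: power_divide power_mult_distrib field_simps)
  finally have "sqrt ((cot (thetap u))^2 + 1 + (cot (psi1 u))^2) = sqrt (5/2) * modulus5 u / rhok 1 u"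
    using assms d_pos by (simp del: real_sqrt_divide real_sqrt_mult)
  then show ?thesis
    using assms d_pos by simp
qed

theorem mainTheorem7:
  fixes u :: tc5
  assumes "rhok 1 u > 0"
  shows "u = (modulus5 u * sqrt (5/2) / sqrt ((cot (thetap u))^2 + 1 + (cot (psi1 u))^2)) *\<^sub>R
             mult5 ((sqrt 2 * cot (thetap u)) *\<^sub>R eplus + ek 1 + cot (psi1 u) *\<^sub>R ek 2)
                   (exp5 (phik 1 u *\<^sub>R etk 1 + phik 2 u *\<^sub>R etk 2))"
proof -
  define X where "X = mult5 ((sqrt 2 * cot (thetap u)) *\<^sub>R eplus + ek 1 + cot (psi1 u) *\<^sub>R ek 2)
                   (exp5 (phik 1 u *\<^sub>R etk 1 + phik 2 u *\<^sub>R etk 2))"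
  have "u = rhok 1 u *\<^sub>R X"
  proof (rule dft5_eqI)
    show "dft5 0 u = dft5 0 (rhok 1 u *\<^sub>R X)"
      unfolding X_def dft5_scaleR dft5_polar_factor dft5_0[of u] cot_thetap
      using assms by simp
    show "dft5 1 u = dft5 1 (rhok 1 u *\<^sub>R X)"
      unfolding X_def dft5_scaleR dft5_polar_factor by (rule dft5_polar)
    show "dft5 2 u = dft5 2 (rhok 1 u *\<^sub>R X)"
      unfolding X_def dft5_scaleR dft5_polar_factor dft5_polar[of 2 u] cot_psi1
      using assms by simp
  qed
  then show ?thesis
    unfolding polar_amplitude_eq_rhok1[OF assms] X_def .
qed

end
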